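(* Let $H=\pi\sigma_z/\tau$ on a qubit, $|\Phi\rangle=(|0\rangle+|1\rangle)/\sqrt2$, and $\rho=\lambda|\Phi\rangle\langle\Phi|+(1-\lambda)I/2$ with $0<\lambda<1$. Then for any TI operation $\mathcal E$ from $n$ copies of the qubit (total Hamiltonian $\sum_{i=1}^nH^{(i)}$) to one qubit with Hamiltonian $H$, $$1-\langle\Phi|\mathcal E(\rho^{\otimes n})|\Phi\rangle\ \ge\ \frac1n\,\frac{1-\lambda^2}{4\lambda^2}+O\Big(\frac1{n^2}\Big)\quad(n\to\infty).$$
   Context: $H^{(i)}=I^{\otimes(i-1)}\otimes H\otimes I^{\otimes(n-i)}$. TI operation: CPTP map $\mathcal E$ with $e^{-iH_{\rm out}t}\mathcal E(\sigma)e^{iH_{\rm out}t}=\mathcal E(e^{-iH_{\rm in}t}\sigma e^{iH_{\rm in}t})$ for all states $\sigma$ and all $t\in\mathbb R$. *)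

theory Defs
  imports Complex_Main "Jordan_Normal_Form.Matrix"
begin

text \<open>Kronecker (tensor) product of matrices; index i of the product corresponds
  to the pair (i div dim_row B, i mod dim_row B), i.e. the first factor is the
  most significant (leftmost) tensor factor.\<close>
definition kron :: "complex mat \<Rightarrow> complex mat \<Rightarrow> complex mat" where
  "kron A B = mat (dim_row A * dim_row B) (dim_col A * dim_col B)
     (\<lambda>(i,j). A $$ (i div dim_row B, j div dim_col B) * B $$ (i mod dim_row B, j mod dim_col B))"

fun tensor_pow :: "nat \<Rightarrow> complex mat \<Rightarrow> complex mat" where
  "tensor_pow 0 A = 1\<^sub>m 1"
| "tensor_pow (Suc n) A = kron A (tensor_pow n A)"

definition mat_exp :: "complex mat \<Rightarrow> complex mat" where
  "mat_exp A = mat (dim_row A) (dim_col A) (\<lambda>(i,j). \<Sum>k. (A ^\<^sub>m k) $$ (i,j) / of_nat (fact k))"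

definition evol :: "complex mat \<Rightarrow> real \<Rightarrow> complex mat" where
  "evol H t = mat_exp ((- \<i> * of_real t) \<cdot>\<^sub>m H)"

definition sigma_z :: "complex mat" where
  "sigma_z = mat 2 2 (\<lambda>(i,j). if i = j then (if i = 0 then 1 else -1) else 0)"

definition qubit_ham :: "real \<Rightarrow> complex mat" where
  "qubit_ham \<tau> = (of_real (pi / \<tau>)) \<cdot>\<^sub>m sigma_z"

definition local_ham :: "complex mat \<Rightarrow> nat \<Rightarrow> nat \<Rightarrow> complex mat" where
  "local_ham H n i = kron (kron (tensor_pow (i - 1) (1\<^sub>m 2)) H) (tensor_pow (n - i) (1\<^sub>m 2))"

definition total_ham :: "complex mat \<Rightarrow> nat \<Rightarrow> complex mat" where
  "total_ham H n = foldr (\<lambda>i M. local_ham H n i + M) [1..<Suc n] (0\<^sub>m (2^n) (2^n))"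

definition mtrace :: "complex mat \<Rightarrow> complex" where
  "mtrace A = (\<Sum>i<dim_row A. A $$ (i,i))"

definition qform :: "complex mat \<Rightarrow> complex vec \<Rightarrow> complex" where
  "qform A v = (\<Sum>i<dim_vec v. \<Sum>j<dim_vec v. cnj (v $ i) * A $$ (i,j) * v $ j)"

definition psd :: "nat \<Rightarrow> complex mat \<Rightarrow> bool" where
  "psd d A \<longleftrightarrow> A \<in> carrier_mat d d \<and>
     (\<forall>v \<in> carrier_vec d. Im (qform A v) = 0 \<and> 0 \<le> Re (qform A v))"

definition density :: "nat \<Rightarrow> complex mat \<Rightarrow> bool" where
  "density d A \<longleftrightarrow> psd d A \<and> mtrace A = 1"

text \<open>(id_k \<otimes> E) applied to a (k*din) x (k*din) matrix viewed as k x k blocks.\<close>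
definition ampliate :: "nat \<Rightarrow> nat \<Rightarrow> nat \<Rightarrow> (complex mat \<Rightarrow> complex mat) \<Rightarrow> complex mat \<Rightarrow> complex mat" where
  "ampliate k din dout E X = mat (k * dout) (k * dout)
     (\<lambda>(i,j). E (mat din din (\<lambda>(a,b). X $$ ((i div dout) * din + a, (j div dout) * din + b)))
              $$ (i mod dout, j mod dout))"

definition cptp :: "nat \<Rightarrow> nat \<Rightarrow> (complex mat \<Rightarrow> complex mat) \<Rightarrow> bool" where
  "cptp din dout E \<longleftrightarrow>
     (\<forall>A \<in> carrier_mat din din. E A \<in> carrier_mat dout dout) \<and>
     (\<forall>A \<in> carrier_mat din din. \<forall>B \<in> carrier_mat din din. E (A + B) = E A + E B) \<and>
     (\<forall>c. \<forall>A \<in> carrier_mat din din. E (c \<cdot>\<^sub>m A) = c \<cdot>\<^sub>m E A) \<and>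
     (\<forall>A \<in> carrier_mat din din. mtrace (E A) = mtrace A) \<and>
     (\<forall>k X. psd (k * din) X \<longrightarrow> psd (k * dout) (ampliate k din dout E X))"

definition TI_op :: "nat \<Rightarrow> nat \<Rightarrow> complex mat \<Rightarrow> complex mat \<Rightarrow> (complex mat \<Rightarrow> complex mat) \<Rightarrow> bool" where
  "TI_op din dout Hin Hout E \<longleftrightarrow> cptp din dout E \<and>
     (\<forall>\<sigma> t. density din \<sigma> \<longrightarrow>
        evol Hout t * E \<sigma> * evol Hout (- t) = E (evol Hin t * \<sigma> * evol Hin (- t)))"

definition Phi :: "complex vec" where
  "Phi = vec 2 (\<lambda>_. of_real (1 / sqrt 2))"

definition proj_Phi :: "complex mat" where
  "proj_Phi = mat 2 2 (\<lambda>(i,j). Phi $ i * cnj (Phi $ j))"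

definition rho :: "real \<Rightarrow> complex mat" where
  "rho l = of_real l \<cdot>\<^sub>m proj_Phi + of_real ((1 - l) / 2) \<cdot>\<^sub>m 1\<^sub>m 2"

end

theory Submission
  imports Defs
begin

text \<open>
  Write \<open>\<rho> = R\<^sup>\<dagger>R\<close> and, for a phase \<open>z = cis \<theta>\<close>, the rotated state
  \<open>\<rho>\<^sub>z = U\<^sub>t \<rho> U\<^sub>t\<^sup>\<dagger> = R\<^sup>\<dagger>Q\<^sub>z\<close>. The Gram matrix of \<open>[R\<^sup>\<otimes>\<^sup>n | Q\<^sub>z\<^sup>\<otimes>\<^sup>n]\<close> is positive, hence so is
  its image under \<open>id\<^sub>2 \<otimes> \<E>\<close>. By covariance its off-diagonal blocks are the rotated output
  \<open>U \<omega> U\<^sup>\<dagger>\<close>, and its lower-right block has trace \<open>(1 + K |z - 1|\<^sup>2)\<^sup>n\<close> with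
  \<open>K = \<lambda>\<^sup>2/(1 - \<lambda>\<^sup>2)\<close>. Testing this 4 x 4 positive matrix against suitable vectors gives, for the
  coherence \<open>c = \<omega>\<^sub>0\<^sub>1\<close> of the output and every real \<open>r\<close>,
  \<open>|c|\<^sup>2 |z - 1|\<^sup>2 (2r - r\<^sup>2 det \<omega>) \<le> (1 + K |z - 1|\<^sup>2)\<^sup>n - 1\<close>.
  Letting \<open>z \<rightarrow> 1\<close> yields the Cramer-Rao type bound \<open>|c|\<^sup>2 \<le> n K det \<omega>\<close>, and with
  \<open>det \<omega> \<le> 1/4 - |c|\<^sup>2\<close> this forces \<open>1 - \<langle>\<Phi>|\<omega>|\<Phi>\<rangle> = 1/2 - Re c \<ge> 1/(4nK + 4)\<close>.
\<close>

section \<open>Conjugate transposes and Gram matrices\<close>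

definition adjoint_mat :: "complex mat \<Rightarrow> complex mat" where
  "adjoint_mat A = mat (dim_col A) (dim_row A) (\<lambda>(i,j). cnj (A $$ (j,i)))"

lemma dim_adjoint_mat[simp]:
  "dim_row (adjoint_mat A) = dim_col A" "dim_col (adjoint_mat A) = dim_row A"
  by (auto simp: adjoint_mat_def)

lemma index_adjoint_mat[simp]:
  "i < dim_col A \<Longrightarrow> j < dim_row A \<Longrightarrow> adjoint_mat A $$ (i,j) = cnj (A $$ (j,i))"
  by (auto simp: adjoint_mat_def)

lemma adjoint_mat_carrier[simp]: "A \<in> carrier_mat m n \<Longrightarrow> adjoint_mat A \<in> carrier_mat n m"
  by auto

lemma adjoint_adjoint_mat[simp]: "adjoint_mat (adjoint_mat A) = A"
  by (rule eq_matI) auto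

lemma adjoint_one_mat[simp]: "adjoint_mat (1\<^sub>m n) = 1\<^sub>m n"
  by (rule eq_matI) auto

lemma adjoint_mat_mult:
  "A \<in> carrier_mat m n \<Longrightarrow> B \<in> carrier_mat n k \<Longrightarrow> adjoint_mat (A * B) = adjoint_mat B * adjoint_mat A"
  by (intro eq_matI) (auto simp: scalar_prod_def mult.commute)

lemma adjoint_four_block_mat:
  assumes "A \<in> carrier_mat m n" "B \<in> carrier_mat m k" "C \<in> carrier_mat l n" "D \<in> carrier_mat l k"
  shows "adjoint_mat (four_block_mat A B C D) =
    four_block_mat (adjoint_mat A) (adjoint_mat C) (adjoint_mat B) (adjoint_mat D)"
  using assms by (intro eq_matI) (auto simp: four_block_mat_def Let_def)

lemma qform_adjoint_mult_self:
  assumes A: "A \<in> carrier_mat m d" and v: "v \<in> carrier_vec d"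
  shows "qform (adjoint_mat A * A) v = of_real (\<Sum>k<m. (cmod (\<Sum>j<d. A $$ (k,j) * v $ j))\<^sup>2)"
proof -
  have "qform (adjoint_mat A * A) v = (\<Sum>i<d. \<Sum>j<d. \<Sum>k<m. cnj (A $$ (k,i) * v $ i) * (A $$ (k,j) * v $ j))"
    unfolding qform_def using A v
    by (simp add: scalar_prod_def atLeast0LessThan sum_distrib_left sum_distrib_right algebra_simps)
  also have "\<dots> = (\<Sum>k<m. cnj (\<Sum>j<d. A $$ (k,j) * v $ j) * (\<Sum>j<d. A $$ (k,j) * v $ j))"
    by (simp add: sum_product sum.swap[where B = "{..<m}"] sum.swap[where A = "{..<d}" and B = "{..<m}"])
  also have "\<dots> = (\<Sum>k<m. of_real ((cmod (\<Sum>j<d. A $$ (k,j) * v $ j))\<^sup>2))"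
    by (intro sum.cong refl) (subst complex_norm_square, rule mult.commute)
  finally show ?thesis by simp
qed

lemma psd_adjoint_mult_self: "A \<in> carrier_mat m d \<Longrightarrow> psd d (adjoint_mat A * A)"
  unfolding psd_def by (auto simp: qform_adjoint_mult_self intro!: sum_nonneg)

lemma psd_four_block_gram:
  assumes R: "R \<in> carrier_mat d d" and Q: "Q \<in> carrier_mat d d"
  shows "psd (2 * d) (four_block_mat (adjoint_mat R * R) (adjoint_mat R * Q)
                                     (adjoint_mat Q * R) (adjoint_mat Q * Q))"
proof -
  let ?N = "four_block_mat R Q (0\<^sub>m d d) (0\<^sub>m d d)"
  have "adjoint_mat ?N = four_block_mat (adjoint_mat R) (0\<^sub>m d d) (adjoint_mat Q) (0\<^sub>m d d)"
    using R Q by (subst adjoint_four_block_mat) (auto intro!: eq_matI)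
  then have "adjoint_mat ?N * ?N = four_block_mat (adjoint_mat R * R) (adjoint_mat R * Q)
                                     (adjoint_mat Q * R) (adjoint_mat Q * Q)"
    using R Q by (simp add: mult_four_block_mat[where ?nr1.0=d and ?n1.0=d and ?nr2.0=d and ?n2.0=d and ?nc1.0=d and ?nc2.0=d] mult_carrier_mat[of _ d d])
  moreover have "?N \<in> carrier_mat (2 * d) (2 * d)" using R Q by auto
  ultimately show ?thesis by (metis psd_adjoint_mult_self)
qed

section \<open>Kronecker products and tensor powers\<close>

lemma dim_kron[simp]:
  "dim_row (kron A B) = dim_row A * dim_row B" "dim_col (kron A B) = dim_col A * dim_col B"
  by (auto simp: kron_def)

lemma index_kron[simp]:
  "i < dim_row A * dim_row B \<Longrightarrow> j < dim_col A * dim_col B \<Longrightarrow>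
   kron A B $$ (i,j) = A $$ (i div dim_row B, j div dim_col B) * B $$ (i mod dim_row B, j mod dim_col B)"
  by (auto simp: kron_def)

lemma kron_carrier_mat[simp]:
  "A \<in> carrier_mat a b \<Longrightarrow> B \<in> carrier_mat c d \<Longrightarrow> kron A B \<in> carrier_mat (a * c) (b * d)"
  by auto

lemma sum_lessThan_mult_split: "(\<Sum>k < p * q. f k) = (\<Sum>x < p. \<Sum>y < (q::nat). f (x * q + y))"
proof (induction p)
  case (Suc p)
  have "(\<Sum>k < Suc p * q. f k) = (\<Sum>k < p * q. f k) + (\<Sum>k \<in> {p * q..<p * q + q}. f k)"
    by (simp add: sum.atLeastLessThan_concat[symmetric] lessThan_atLeast0 add.commute)
  also have "(\<Sum>k \<in> {p * q..<p * q + q}. f k) = (\<Sum>y < q. f (p * q + y))"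
    by (simp add: sum.shift_bounds_nat_ivl[symmetric] lessThan_atLeast0 add.commute
        sum.atLeastLessThan_shift_bounds)
  finally show ?case using Suc by simp
qed simp

lemma mult_add_less_mult: "x < b \<Longrightarrow> y < d \<Longrightarrow> x * d + y < b * (d::nat)"
proof -
  assume "x < b" "y < d"
  then have "x * d + y < (x + 1) * d" and "(x + 1) * d \<le> b * d"
    by (simp, intro mult_le_mono1) simp_all
  then show ?thesis by linarith
qed

lemma kron_mult:
  assumes A: "A \<in> carrier_mat a b" and B: "B \<in> carrier_mat c d"
    and C: "C \<in> carrier_mat b e" and D: "D \<in> carrier_mat d f"
  shows "kron A B * kron C D = kron (A * C) (B * D)"
proof (rule eq_matI)
  fix i j assume "i < dim_row (kron (A * C) (B * D))" "j < dim_col (kron (A * C) (B * D))"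
  then have i: "i < a * c" and j: "j < e * f" using A B C D by auto
  then have c: "0 < c" and f: "0 < f" by (auto intro: Nat.gr0I)
  have "(kron A B * kron C D) $$ (i,j) = (\<Sum>k < b * d. kron A B $$ (i,k) * kron C D $$ (k,j))"
    using i j A B C D by (simp add: scalar_prod_def atLeast0LessThan)
  also have "\<dots> = (\<Sum>x<b. \<Sum>y<d. (A $$ (i div c, x) * C $$ (x, j div f)) * (B $$ (i mod c, y) * D $$ (y, j mod f)))"
    unfolding sum_lessThan_mult_split
  proof (intro sum.cong refl)
    fix x y assume "x \<in> {..<b}" "y \<in> {..<d}"
    then have "x * d + y < b * d" "(x * d + y) div d = x" "(x * d + y) mod d = y"
      by (auto simp: mult_add_less_mult)
    then show "kron A B $$ (i, x * d + y) * kron C D $$ (x * d + y, j)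
      = (A $$ (i div c, x) * C $$ (x, j div f)) * (B $$ (i mod c, y) * D $$ (y, j mod f))"
      using i j A B C D by (simp add: algebra_simps)
  qed
  also have "\<dots> = (\<Sum>x<b. A $$ (i div c, x) * C $$ (x, j div f)) * (\<Sum>y<d. B $$ (i mod c, y) * D $$ (y, j mod f))"
    by (simp add: sum_product)
  also have "\<dots> = kron (A * C) (B * D) $$ (i,j)"
    using i j c f A B C D by (simp add: scalar_prod_def atLeast0LessThan less_mult_imp_div_less)
  finally show "(kron A B * kron C D) $$ (i,j) = kron (A * C) (B * D) $$ (i,j)" .
qed (use A B C D in auto)

lemma adjoint_kron: "adjoint_mat (kron A B) = kron (adjoint_mat A) (adjoint_mat B)"
proof (rule eq_matI)
  fix i j assume "i < dim_row (kron (adjoint_mat A) (adjoint_mat B))"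
    "j < dim_col (kron (adjoint_mat A) (adjoint_mat B))"
  then have i: "i < dim_col A * dim_col B" and j: "j < dim_row A * dim_row B" by auto
  then have "0 < dim_col B" "0 < dim_row B" by (auto intro: Nat.gr0I)
  then show "adjoint_mat (kron A B) $$ (i,j) = kron (adjoint_mat A) (adjoint_mat B) $$ (i,j)"
    using i j by (simp add: less_mult_imp_div_less)
qed auto

lemma mtrace_kron:
  assumes "A \<in> carrier_mat a a" "B \<in> carrier_mat b b"
  shows "mtrace (kron A B) = mtrace A * mtrace B"
proof -
  have "mtrace (kron A B) = (\<Sum>x<a. \<Sum>y<b. A $$ (x,x) * B $$ (y,y))"
    unfolding mtrace_def using assms
    by (simp add: sum_lessThan_mult_split mult_add_less_mult)
  then show ?thesis using assms by (simp add: mtrace_def sum_product)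
qed

lemma tensor_pow_carrier[simp]: "A \<in> carrier_mat m m \<Longrightarrow> tensor_pow n A \<in> carrier_mat (m^n) (m^n)"
  by (induction n) auto

lemma tensor_pow_mult:
  assumes A: "A \<in> carrier_mat m m" and B: "B \<in> carrier_mat m m"
  shows "tensor_pow n (A * B) = tensor_pow n A * tensor_pow n B"
proof (induction n)
  case (Suc n)
  then show ?case
    using A B by (simp add: kron_mult[where a=m and b=m and c="m^n" and d="m^n" and e=m and f="m^n"])
qed simp

lemma adjoint_tensor_pow: "adjoint_mat (tensor_pow n A) = tensor_pow n (adjoint_mat A)"
  by (induction n) (auto simp: adjoint_kron)

lemma adjoint_tensor_pow_mult:
  "A \<in> carrier_mat m m \<Longrightarrow> B \<in> carrier_mat m m \<Longrightarrow>
   adjoint_mat (tensor_pow n A) * tensor_pow n B = tensor_pow n (adjoint_mat A * B)"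
  by (simp add: adjoint_tensor_pow tensor_pow_mult[OF adjoint_mat_carrier])

lemma mtrace_tensor_pow: "A \<in> carrier_mat m m \<Longrightarrow> mtrace (tensor_pow n A) = mtrace A ^ n"
proof (induction n)
  case (Suc n)
  then show ?case by (simp add: mtrace_kron[where a=m and b="m^n"])
qed (simp add: mtrace_def)

section \<open>Diagonal matrices and time evolution\<close>

lemma dim_mat_diag[simp]: "dim_row (mat_diag n f) = n" "dim_col (mat_diag n f) = n"
  by (simp_all add: mat_diag_def)

lemma index_mat_diag[simp]:
  "i < n \<Longrightarrow> j < n \<Longrightarrow> mat_diag n f $$ (i,j) = (if i = j then f i else 0)"
  by (simp add: mat_diag_def)

lemma mat_diag_cong: "(\<And>i. i < n \<Longrightarrow> f i = g i) \<Longrightarrow> mat_diag n f = mat_diag n g"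
  by (rule eq_matI) auto

lemma smult_mat_diag: "c \<cdot>\<^sub>m mat_diag n f = mat_diag n (\<lambda>i. c * f i :: complex)"
  by (rule eq_matI) auto

lemma mat_diag_power: "mat_diag n f ^\<^sub>m k = mat_diag n (\<lambda>i. f i ^ k :: complex)"
  by (induction k) (auto simp: mult.commute)


lemma mat_exp_mat_diag: "mat_exp (mat_diag n f) = mat_diag n (\<lambda>i. exp (f i))"
proof -
  have "(\<Sum>k. f i ^ k / of_nat (fact k)) = exp (f i)" for i
    using exp_converges[of "f i"] by (simp add: sums_iff scaleR_conv_of_real divide_inverse mult.commute)
  then show ?thesis
    by (intro eq_matI) (auto simp: mat_exp_def mat_diag_power)
qed

lemma evol_mat_diag: "evol (mat_diag n h) t = mat_diag n (\<lambda>i. exp (- \<i> * of_real t * h i))"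
  by (simp add: evol_def smult_mat_diag mat_exp_mat_diag)

lemma kron_mat_diag:
  assumes "0 < q"
  shows "kron (mat_diag p f) (mat_diag q g) = mat_diag (p * q) (\<lambda>i. f (i div q) * g (i mod q))"
proof (rule eq_matI)
  fix i j assume "i < dim_row (mat_diag (p * q) (\<lambda>i. f (i div q) * g (i mod q)))"
    "j < dim_col (mat_diag (p * q) (\<lambda>i. f (i div q) * g (i mod q)))"
  then have i: "i < p * q" and j: "j < p * q" by auto
  have "i div q = j div q \<and> i mod q = j mod q \<longleftrightarrow> i = j"
    by (metis div_mult_mod_eq)
  then show "kron (mat_diag p f) (mat_diag q g) $$ (i,j) = mat_diag (p * q) (\<lambda>i. f (i div q) * g (i mod q)) $$ (i,j)"
    using i j assms by (auto simp: less_mult_imp_div_less)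
qed auto

lemma kron_one_mat: "kron (1\<^sub>m a) (1\<^sub>m b) = 1\<^sub>m (a * b)"
proof (cases "b = 0")
  case False
  then show ?thesis by (simp flip: mat_diag_one add: kron_mat_diag)
qed (auto intro: eq_matI)

lemma tensor_pow_one_mat: "tensor_pow n (1\<^sub>m m) = 1\<^sub>m (m ^ n)"
  by (induction n) (simp_all add: kron_one_mat)

lemma digit_mod_power:
  assumes "0 < (m::nat)" "k < n"
  shows "(i mod m ^ n) div m ^ k mod m = i div m ^ k mod m"
proof -
  obtain r where n: "n = k + Suc r" using less_imp_Suc_add[OF assms(2)] by auto
  have "i mod (m ^ k * m ^ Suc r) = m ^ k * (i div m ^ k mod m ^ Suc r) + i mod m ^ k"
    by (rule mod_mult2_eq)
  moreover have "(m ^ k * (i div m ^ k mod m ^ Suc r) + i mod m ^ k) div m ^ k = i div m ^ k mod m ^ Suc r"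
    using assms(1) by simp
  ultimately show ?thesis
    unfolding n power_add by (simp add: mod_mod_cancel)
qed

lemma tensor_pow_mat_diag:
  assumes "0 < m"
  shows "tensor_pow n (mat_diag m e) = mat_diag (m ^ n) (\<lambda>i. \<Prod>k\<in>{1..n}. e (i div m ^ (n - k) mod m))"
proof (induction n)
  case (Suc n)
  have "tensor_pow (Suc n) (mat_diag m e)
      = mat_diag (m * m ^ n) (\<lambda>i. e (i div m ^ n) * (\<Prod>k\<in>{1..n}. e (i mod m ^ n div m ^ (n - k) mod m)))"
    using Suc assms by (simp add: kron_mat_diag)
  also have "\<dots> = mat_diag (m * m ^ n) (\<lambda>i. \<Prod>k\<in>{1..Suc n}. e (i div m ^ (Suc n - k) mod m))"
  proof (rule mat_diag_cong)
    fix i assume "i < m * m ^ n"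
    then have "i div m ^ n mod m = i div m ^ n"
      by (simp add: less_mult_imp_div_less mult.commute)
    moreover have "(\<Prod>k\<in>{1..Suc n}. e (i div m ^ (Suc n - k) mod m))
        = e (i div m ^ n mod m) * (\<Prod>k\<in>{1..n}. e (i div m ^ (n - k) mod m))"
      by (simp add: prod.atLeast_Suc_atMost prod.shift_bounds_cl_Suc_ivl del: prod.cl_ivl_Suc)
    moreover have "(\<Prod>k\<in>{1..n}. e (i div m ^ (n - k) mod m)) = (\<Prod>k\<in>{1..n}. e (i mod m ^ n div m ^ (n - k) mod m))"
      using assms by (intro prod.cong refl) (simp add: digit_mod_power)
    ultimately show "e (i div m ^ n) * (\<Prod>k\<in>{1..n}. e (i mod m ^ n div m ^ (n - k) mod m))
        = (\<Prod>k\<in>{1..Suc n}. e (i div m ^ (Suc n - k) mod m))"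
      by simp
  qed
  finally show ?case by simp
qed simp

lemma local_ham_mat_diag:
  assumes "1 \<le> k" "k \<le> n"
  shows "local_ham (mat_diag 2 h) n k = mat_diag (2 ^ n) (\<lambda>i. h (i div 2 ^ (n - k) mod 2))"
proof -
  have "2 ^ (k - 1) * 2 * 2 ^ (n - k) = (2::nat) ^ n"
    using assms by (simp flip: power_add power_Suc2)
  then show ?thesis
    unfolding local_ham_def tensor_pow_one_mat by (simp flip: mat_diag_one add: kron_mat_diag)
qed

lemma total_ham_mat_diag:
  "total_ham (mat_diag 2 h) n = mat_diag (2 ^ n) (\<lambda>i. \<Sum>k\<in>{1..n}. h (i div 2 ^ (n - k) mod 2))"
proof -
  have "foldr (\<lambda>k M. local_ham (mat_diag 2 h) n k + M) ks (0\<^sub>m (2^n) (2^n))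
      = mat_diag (2 ^ n) (\<lambda>i. \<Sum>k\<leftarrow>ks. h (i div 2 ^ (n - k) mod 2))"
    if "set ks \<subseteq> {1..n}" for ks
    using that by (induction ks) (auto simp: local_ham_mat_diag intro!: eq_matI)
  from this[of "[1..<Suc n]"] show ?thesis
    unfolding total_ham_def
    by (simp only: sum_list_distinct_conv_sum_set[OF distinct_upt] set_upt
        atLeastLessThanSuc_atLeastAtMost order_refl)
qed

lemma evol_total_ham_mat_diag:
  "evol (total_ham (mat_diag 2 h) n) t = tensor_pow n (evol (mat_diag 2 h) t)"
  by (simp add: total_ham_mat_diag evol_mat_diag tensor_pow_mat_diag sum_distrib_left exp_sum)

section \<open>Qubit operators\<close>

definition mat2 :: "complex \<Rightarrow> complex \<Rightarrow> complex \<Rightarrow> complex \<Rightarrow> complex mat" where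
  "mat2 a b c d = mat 2 2 (\<lambda>(i,j). if i = 0 then if j = 0 then a else b else if j = 0 then c else d)"

lemma mat2_carrier[simp]: "mat2 a b c d \<in> carrier_mat 2 2"
  and dim_mat2[simp]: "dim_row (mat2 a b c d) = 2" "dim_col (mat2 a b c d) = 2"
  by (simp_all add: mat2_def)

lemma index_mat2[simp]:
  "mat2 a b c d $$ (0,0) = a" "mat2 a b c d $$ (0,1) = b"
  "mat2 a b c d $$ (1,0) = c" "mat2 a b c d $$ (1,1) = d"
  "mat2 a b c d $$ (0,Suc 0) = b" "mat2 a b c d $$ (Suc 0,0) = c" "mat2 a b c d $$ (Suc 0,Suc 0) = d"
  by (simp_all add: mat2_def)

lemma less_2_cases: "(i::nat) < 2 \<longleftrightarrow> i = 0 \<or> i = 1"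
  by auto

lemma mat2_eta: "A \<in> carrier_mat 2 2 \<Longrightarrow> A = mat2 (A $$ (0,0)) (A $$ (0,1)) (A $$ (1,0)) (A $$ (1,1))"
  by (rule eq_matI) (auto simp: mat2_def less_2_cases)

lemma sum_lessThan_2: "(\<Sum>k<2::nat. f k) = f 0 + f 1"
  by (simp add: numeral_2_eq_2)

lemma mult_mat2:
  "mat2 a b c d * mat2 a' b' c' d' = mat2 (a * a' + b * c') (a * b' + b * d') (c * a' + d * c') (c * b' + d * d')"
  by (rule eq_matI) (auto simp: mat2_def scalar_prod_def less_2_cases numeral_2_eq_2)

lemma adjoint_mat2: "adjoint_mat (mat2 a b c d) = mat2 (cnj a) (cnj c) (cnj b) (cnj d)"
  by (rule eq_matI) (auto simp: mat2_def less_2_cases)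

lemma mtrace_mat2: "mtrace (mat2 a b c d) = a + d"
  by (simp add: mtrace_def sum_lessThan_2)

lemma mat_diag_2: "mat_diag 2 f = mat2 (f 0) 0 0 (f 1)"
  by (rule eq_matI) (auto simp: mat2_def less_2_cases)

lemma qform_mat2_Phi: "qform (mat2 a b c d) Phi = (a + b + c + d) / 2"
proof -
  have "complex_of_real (1 / sqrt 2) * complex_of_real (1 / sqrt 2) = 1 / 2"
    by (simp flip: of_real_mult)
  then show ?thesis
    by (simp add: qform_def Phi_def sum_lessThan_2 algebra_simps add_divide_distrib)
qed

lemma rho_mat2: "rho l = mat2 (1/2) (of_real l / 2) (of_real l / 2) (1/2)"
proof -
  have "complex_of_real (1 / sqrt 2) * complex_of_real (1 / sqrt 2) = 1 / 2"
    by (simp flip: of_real_mult)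
  then show ?thesis
    by (intro eq_matI) (auto simp: rho_def proj_Phi_def Phi_def mat2_def less_2_cases field_simps)
qed

lemma rho_carrier[simp]: "rho l \<in> carrier_mat 2 2"
  by (simp add: rho_mat2)

lemma qubit_ham_mat_diag: "qubit_ham \<tau> = mat_diag 2 (\<lambda>i. of_real (pi / \<tau>) * (if i = 0 then 1 else -1))"
  by (rule eq_matI) (auto simp: qubit_ham_def sigma_z_def)

lemma evol_qubit_ham: "evol (qubit_ham \<tau>) t = mat2 (cis (- t * pi / \<tau>)) 0 0 (cis (t * pi / \<tau>))"
  unfolding qubit_ham_mat_diag evol_mat_diag by (simp add: mat_diag_2 cis_conv_exp algebra_simps)

lemma evol_total_qubit_ham:
  "evol (total_ham (qubit_ham \<tau>) n) t = tensor_pow n (evol (qubit_ham \<tau>) t)"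
  unfolding qubit_ham_mat_diag by (rule evol_total_ham_mat_diag)

lemma evol_qubit_ham_conj:
  "evol (qubit_ham \<tau>) t * mat2 a b c d * evol (qubit_ham \<tau>) (- t)
     = mat2 a (cis (- 2 * t * pi / \<tau>) * b) (cnj (cis (- 2 * t * pi / \<tau>)) * c) d"
proof -
  have "cis x * cis (- x) = 1" "cis x * cis x = cis (2 * x)" for x
    by (simp_all add: cis_mult)
  then show ?thesis
    by (simp add: evol_qubit_ham mult_mat2 cis_cnj algebra_simps)
qed

lemma evol_total_qubit_ham_conj:
  assumes "A \<in> carrier_mat 2 2"
  shows "evol (total_ham (qubit_ham \<tau>) n) t * tensor_pow n A * evol (total_ham (qubit_ham \<tau>) n) (- t)
           = tensor_pow n (evol (qubit_ham \<tau>) t * A * evol (qubit_ham \<tau>) (- t))"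
proof -
  have U: "evol (qubit_ham \<tau>) s \<in> carrier_mat 2 2" for s
    by (simp add: evol_qubit_ham)
  show ?thesis
    unfolding evol_total_qubit_ham
    by (simp add: tensor_pow_mult[OF mult_carrier_mat[OF U assms] U] tensor_pow_mult[OF U assms])
qed

definition rho_phase :: "real \<Rightarrow> complex \<Rightarrow> complex mat" where
  "rho_phase l z = mat2 (1/2) (z * of_real l / 2) (cnj z * of_real l / 2) (1/2)"

lemma adjoint_rho_phase: "adjoint_mat (rho_phase l z) = rho_phase l z"
  by (simp add: rho_phase_def adjoint_mat2)

lemma evol_qubit_ham_conj_rho:
  "evol (qubit_ham \<tau>) t * rho l * evol (qubit_ham \<tau>) (- t) = rho_phase l (cis (- 2 * t * pi / \<tau>))"
  by (simp add: rho_mat2 evol_qubit_ham_conj rho_phase_def)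

definition rho_factor :: "real \<Rightarrow> complex mat" where
  "rho_factor l = mat2 (of_real (1 / sqrt 2)) (of_real (l / sqrt 2)) 0 (of_real (sqrt (1 - l\<^sup>2) / sqrt 2))"

text \<open>\<open>rho_cofactor l z = (R\<^sup>\<dagger>)\<^sup>-\<^sup>1 (rho_phase l z)\<close> for the triangular factor \<open>R = rho_factor l\<close>.\<close>
definition rho_cofactor :: "real \<Rightarrow> complex \<Rightarrow> complex mat" where
  "rho_cofactor l z = mat2 (of_real (1 / sqrt 2)) (z * of_real (l / sqrt 2))
     (of_real (l / (sqrt 2 * sqrt (1 - l\<^sup>2))) * (cnj z - 1))
     ((1 - of_real (l\<^sup>2) * z) / of_real (sqrt 2 * sqrt (1 - l\<^sup>2)))"

lemma rho_factor_carrier[simp]: "rho_factor l \<in> carrier_mat 2 2"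
  and rho_cofactor_carrier[simp]: "rho_cofactor l z \<in> carrier_mat 2 2"
  by (simp_all add: rho_factor_def rho_cofactor_def)

lemma
  assumes "\<bar>l\<bar> < 1"
  shows adjoint_rho_factor_mult_self: "adjoint_mat (rho_factor l) * rho_factor l = rho l"
    and adjoint_rho_factor_mult_cofactor:
      "adjoint_mat (rho_factor l) * rho_cofactor l z = rho_phase l z"
proof -
  define L S R where "L = complex_of_real l" and "S = complex_of_real (sqrt (1 - l\<^sup>2))"
    and "R = complex_of_real (sqrt 2)"
  have "l\<^sup>2 < 1" using assms by (simp add: abs_square_less_1)
  then have SS: "S * S = 1 - L\<^sup>2" and "S \<noteq> 0"
    by (simp_all add: S_def L_def flip: of_real_mult)
  have RR: "R * R = 2" and "R \<noteq> 0" by (simp_all add: R_def flip: of_real_mult)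
  have RR': "R * (R * x) = 2 * x" for x by (simp add: RR flip: mult.assoc)
  have real: "cnj L = L" "cnj S = S" "cnj R = R" by (simp_all add: L_def S_def R_def)
  have factor: "rho_factor l = mat2 (1 / R) (L / R) 0 (S / R)"
    and cofactor: "rho_cofactor l z = mat2 (1 / R) (z * L / R) (L * (cnj z - 1) / (R * S)) ((1 - L\<^sup>2 * z) / (R * S))"
    by (simp_all add: rho_factor_def rho_cofactor_def L_def S_def R_def)
  show "adjoint_mat (rho_factor l) * rho_factor l = rho l"
    unfolding factor rho_mat2 adjoint_mat2 mult_mat2
    using RR SS \<open>R \<noteq> 0\<close> by (simp add: L_def R_def S_def field_simps power2_eq_square)
  show "adjoint_mat (rho_factor l) * rho_cofactor l z = rho_phase l z"
    unfolding factor cofactor adjoint_mat2 mult_mat2 rho_phase_def L_def[symmetric]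
    using \<open>R \<noteq> 0\<close> \<open>S \<noteq> 0\<close> by (simp add: real field_simps RR RR') (simp add: algebra_simps power2_eq_square)
qed

lemma mtrace_rho_cofactor:
  assumes "\<bar>l\<bar> < 1" and "cmod z = 1"
  shows "mtrace (adjoint_mat (rho_cofactor l z) * rho_cofactor l z)
           = of_real (1 + l\<^sup>2 / (1 - l\<^sup>2) * (cmod (z - 1))\<^sup>2)"
proof -
  define L S R where "L = complex_of_real l" and "S = complex_of_real (sqrt (1 - l\<^sup>2))"
    and "R = complex_of_real (sqrt 2)"
  have "l\<^sup>2 < 1" using assms by (simp add: abs_square_less_1)
  then have SS: "S * S = 1 - L\<^sup>2" and "S \<noteq> 0" and "1 - L\<^sup>2 \<noteq> 0"
    by (simp_all add: S_def L_def flip: of_real_mult of_real_power)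
  have RR: "R * R = 2" and "R \<noteq> 0" by (simp_all add: R_def flip: of_real_mult)
  have real: "cnj L = L" "cnj S = S" "cnj R = R" by (simp_all add: L_def S_def R_def)
  have zz: "z * cnj z = 1" using assms(2) by (simp add: complex_norm_square[symmetric])
  have cofactor: "rho_cofactor l z = mat2 (1 / R) (z * L / R) (L * (cnj z - 1) / (R * S)) ((1 - L\<^sup>2 * z) / (R * S))"
    by (simp add: rho_cofactor_def L_def S_def R_def)
  have "mtrace (adjoint_mat (rho_cofactor l z) * rho_cofactor l z)
      = (1 + L\<^sup>2 * (z * cnj z)) / (R * R)
        + (L\<^sup>2 * ((cnj z - 1) * (z - 1)) + (1 - L\<^sup>2 * cnj z) * (1 - L\<^sup>2 * z)) / (R * R * (S * S))"
    unfolding cofactor adjoint_mat2 mult_mat2 mtrace_mat2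
    using \<open>R \<noteq> 0\<close> \<open>S \<noteq> 0\<close> by (simp add: real field_simps power2_eq_square)
  also have "\<dots> = 1 + L\<^sup>2 / (1 - L\<^sup>2) * ((z - 1) * cnj (z - 1))"
    unfolding RR SS using \<open>1 - L\<^sup>2 \<noteq> 0\<close> zz
    by (simp add: field_simps) (simp add: algebra_simps power2_eq_square flip: mult.assoc)
  also have "\<dots> = of_real (1 + l\<^sup>2 / (1 - l\<^sup>2) * (cmod (z - 1))\<^sup>2)"
    by (simp only: L_def complex_norm_square of_real_add of_real_mult of_real_divide
        of_real_diff of_real_1 of_real_power[of l])
  finally show ?thesis .
qed

lemma density_tensor_pow_rho: "\<bar>l\<bar> < 1 \<Longrightarrow> density (2 ^ n) (tensor_pow n (rho l))"
proof -
  assume l: "\<bar>l\<bar> < 1"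
  have "tensor_pow n (rho l) = adjoint_mat (tensor_pow n (rho_factor l)) * tensor_pow n (rho_factor l)"
    by (simp add: adjoint_rho_factor_mult_self[OF l, symmetric] adjoint_tensor_pow tensor_pow_mult[of _ 2])
  moreover have "mtrace (tensor_pow n (rho l)) = 1"
    by (simp add: mtrace_tensor_pow[of _ 2] rho_mat2 mtrace_mat2)
  ultimately show ?thesis
    unfolding density_def by (metis psd_adjoint_mult_self tensor_pow_carrier rho_factor_carrier)
qed

section \<open>Positive matrices and channels\<close>

lemma qform_two_basis:
  assumes "i < n" "j < n" "i \<noteq> j" "A \<in> carrier_mat n n"
  shows "qform A (vec n (\<lambda>k. (if k = i then 1 else 0) + (if k = j then x else 0)))
    = A $$ (i,i) + A $$ (i,j) * x + cnj x * A $$ (j,i) + cnj x * A $$ (j,j) * x"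
proof -
  have pull: "(\<Sum>k\<in>S. if P then f k else 0) = (if P then sum f S else 0)" for P S and f :: "nat \<Rightarrow> complex"
    by simp
  show ?thesis using assms
  by (simp add: qform_def algebra_simps sum.distrib if_distrib[of cnj] sum.delta pull
      if_distrib[where f="\<lambda>y. y * _"] if_distrib[where f="\<lambda>y. _ * y"] cong: if_cong)
qed

lemma qform_one_basis:
  assumes "i < n" "A \<in> carrier_mat n n"
  shows "qform A (vec n (\<lambda>k. if k = i then 1 else 0)) = A $$ (i,i)"
  using assms
  by (simp add: qform_def if_distrib[of cnj] if_distrib[where f="\<lambda>y. y * _"] if_distrib[where f="\<lambda>y. _ * y"] cong: if_cong)

lemma psd_diag_real:
  assumes "psd n A" "i < n"
  shows "Im (A $$ (i,i)) = 0"
proof -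
  have "A \<in> carrier_mat n n" "Im (qform A (vec n (\<lambda>k. if k = i then 1 else 0))) = 0"
    using assms by (auto simp: psd_def)
  then show ?thesis using qform_one_basis[OF assms(2)] by simp
qed

lemma psd_hermitian:
  assumes A: "psd n A" and i: "i < n" and j: "j < n"
  shows "A $$ (j,i) = cnj (A $$ (i,j))"
proof (cases "i = j")
  case True
  then show ?thesis using psd_diag_real[OF A i] by (simp add: complex_eq_iff)
next
  case False
  have c: "A \<in> carrier_mat n n" using A by (simp add: psd_def)
  have "Im (qform A (vec n (\<lambda>k. (if k = i then 1 else 0) + (if k = j then x else 0)))) = 0" for x
    using A by (simp add: psd_def)
  from this[of 1] this[of \<i>] psd_diag_real[OF A i] psd_diag_real[OF A j]
  show ?thesis
    unfolding qform_two_basis[OF i j False c] by (simp add: complex_eq_iff algebra_simps)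
qed

lemma ampliate_four_block_mat:
  assumes "A \<in> carrier_mat d d" "B \<in> carrier_mat d d" "C \<in> carrier_mat d d" "D \<in> carrier_mat d d"
    and "E A \<in> carrier_mat m m" "E B \<in> carrier_mat m m" "E C \<in> carrier_mat m m" "E D \<in> carrier_mat m m"
  shows "ampliate 2 d m E (four_block_mat A B C D) = four_block_mat (E A) (E B) (E C) (E D)"
proof -
  let ?blk = "\<lambda>p q. if p = 0 then if q = 0 then A else B else if q = 0 then C else D"
  have blk: "mat d d (\<lambda>(a,b). four_block_mat A B C D $$ (p * d + a, q * d + b)) = ?blk p q"
    if "p < 2" "q < 2" for p q
    using that assms by (intro eq_matI) (auto simp: four_block_mat_def less_2_cases)
  have "i div m < 2 \<and> (i < m \<longleftrightarrow> i div m = 0) \<and> i mod m = (if i < m then i else i - m)"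
    if "i < 2 * m" for i
    using that by (auto simp: less_mult_imp_div_less mult.commute div_if mod_if)
  then show ?thesis
    using assms by (intro eq_matI) (auto simp: ampliate_def blk)
qed

lemma psd_channel_four_block_gram:
  assumes E: "cptp d m E" and R: "R \<in> carrier_mat d d" and Q: "Q \<in> carrier_mat d d"
  shows "psd (2 * m) (four_block_mat (E (adjoint_mat R * R)) (E (adjoint_mat R * Q))
                                     (E (adjoint_mat Q * R)) (E (adjoint_mat Q * Q)))"
proof -
  have c: "adjoint_mat X * Y \<in> carrier_mat d d" if "X \<in> carrier_mat d d" "Y \<in> carrier_mat d d" for X Y
    using that by (meson adjoint_mat_carrier mult_carrier_mat)
  have Ec: "E (adjoint_mat X * Y) \<in> carrier_mat m m" if "X \<in> carrier_mat d d" "Y \<in> carrier_mat d d" for X Y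
    using E c[OF that] by (simp add: cptp_def)
  have "psd (2 * m) (ampliate 2 d m E (four_block_mat (adjoint_mat R * R) (adjoint_mat R * Q)
                                     (adjoint_mat Q * R) (adjoint_mat Q * Q)))"
    using E psd_four_block_gram[OF R Q] by (simp add: cptp_def)
  then show ?thesis
    by (simp add: ampliate_four_block_mat[OF c[OF R R] c[OF R Q] c[OF Q R] c[OF Q Q]
          Ec[OF R R] Ec[OF R Q] Ec[OF Q R] Ec[OF Q Q]])
qed

lemma ampliate_1: "X \<in> carrier_mat d d \<Longrightarrow> E X \<in> carrier_mat m m \<Longrightarrow> ampliate 1 d m E X = E X"
proof -
  assume X: "X \<in> carrier_mat d d" and EX: "E X \<in> carrier_mat m m"
  have "mat d d (\<lambda>(a,b). X $$ (a,b)) = X" using X by (intro eq_matI) auto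
  then show ?thesis using EX by (intro eq_matI) (auto simp: ampliate_def)
qed

lemma cptp_density: "cptp d m E \<Longrightarrow> density d \<sigma> \<Longrightarrow> density m (E \<sigma>)"
  unfolding cptp_def density_def psd_def
  by (metis (no_types, lifting) ampliate_1 mult_1 psd_def)

text \<open>The witnesses are the columns of \<open>(-X; 1)\<close> with \<open>X = 1 + r adj(\<omega>) (\<omega>\<^sub>z - \<omega>)\<close>, where \<open>\<omega>\<close> and
  \<open>\<omega>\<^sub>z\<close> are the two upper blocks; their quadratic forms add up to
  \<open>tr (X\<^sup>\<dagger>\<omega>X - X\<^sup>\<dagger>\<omega>\<^sub>z - \<omega>\<^sub>z\<^sup>\<dagger>X + Z)\<close>.\<close>
lemma qform_phase_block_witnesses:
  fixes p q c z r Z00 Z01 Z10 Z11 :: complex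
  assumes "cnj p = p" "cnj q = q" "cnj r = r" "p + q = 1"
  defines "M \<equiv> four_block_mat (mat2 p c (cnj c) q) (mat2 p (z * c) (cnj z * cnj c) q)
                              (mat2 p (z * c) (cnj z * cnj c) q) (mat2 Z00 Z01 Z10 Z11)"
    and "w \<equiv> (z - 1) * c"
  shows "qform M (vec 4 (\<lambda>i. [- (1 - r * c * cnj w), - r * p * cnj w, 1, 0] ! i))
       + qform M (vec 4 (\<lambda>i. [- r * q * w, - (1 - r * cnj c * w), 0, 1] ! i))
       = Z00 + Z11 - 1 - 2 * r * w * cnj w + r\<^sup>2 * (p * q - c * cnj c) * w * cnj w"
proof -
  have four: "(4::nat) = Suc (Suc (Suc (Suc 0)))" by simp
  have q: "q = 1 - p" using assms(4) by (simp add: algebra_simps)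
  show ?thesis
    unfolding qform_def M_def four_block_mat_def Let_def four
    by (simp add: lessThan_Suc mat2_def assms(1-3)) (simp add: q w_def algebra_simps power2_eq_square)
qed

lemma psd_phase_block_bound:
  fixes p q c c' z :: complex and r :: real
  assumes psd: "psd 4 (four_block_mat (mat2 p c c' q) (mat2 p (z * c) (cnj z * c') q)
                                     (mat2 p (z * c) (cnj z * c') q) Z)"
    and Z: "Z \<in> carrier_mat 2 2" and tr: "p + q = 1"
  shows "(cmod c)\<^sup>2 * (cmod (z - 1))\<^sup>2 * (2 * r - r\<^sup>2 * (Re p * (1 - Re p) - (cmod c)\<^sup>2))
           \<le> Re (mtrace Z) - 1"
proof -
  let ?M = "four_block_mat (mat2 p c c' q) (mat2 p (z * c) (cnj z * c') q) (mat2 p (z * c) (cnj z * c') q) Z"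
  have "?M $$ (1,0) = cnj (?M $$ (0,1))" "Im (?M $$ (0,0)) = 0" "Im (?M $$ (1,1)) = 0"
    using psd_hermitian[OF psd, of 0 1] psd_diag_real[OF psd, of 0] psd_diag_real[OF psd, of 1] by auto
  then have c': "c' = cnj c" and p: "cnj p = p" and q: "cnj q = q"
    using Z by (simp_all add: four_block_mat_def complex_eq_iff)
  define w where "w = (z - 1) * c"
  define P where "P = Re p"
  have "w * cnj w = (c * cnj c) * ((z - 1) * cnj (z - 1))"
    by (simp add: w_def algebra_simps)
  then have ww: "w * cnj w = of_real ((cmod c)\<^sup>2 * (cmod (z - 1))\<^sup>2)"
    by (simp only: complex_norm_square of_real_mult)
  have det: "p * q - c * cnj c = of_real (P * (1 - P) - (cmod c)\<^sup>2)"
  proof -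
    have "p = of_real P" using p by (simp add: P_def complex_eq_iff)
    moreover have "q = 1 - p" using tr by (simp add: algebra_simps)
    ultimately have "p * q - c * cnj c = of_real P * (1 - of_real P) - of_real ((cmod c)\<^sup>2)"
      by (simp only: complex_norm_square)
    then show ?thesis by simp
  qed
  obtain z00 z01 z10 z11 where Z_eq: "Z = mat2 z00 z01 z10 z11"
    using mat2_eta[OF Z] by blast
  let ?v0 = "vec 4 (\<lambda>i. [- (1 - of_real r * c * cnj w), - of_real r * p * cnj w, 1, 0] ! i)"
  let ?v1 = "vec 4 (\<lambda>i. [- of_real r * q * w, - (1 - of_real r * cnj c * w), 0, 1] ! i)"
  have "0 \<le> Re (qform ?M ?v0 + qform ?M ?v1)"
    using psd unfolding psd_def by (simp add: add_nonneg_nonneg)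
  also have "qform ?M ?v0 + qform ?M ?v1 = z00 + z11 - 1 - 2 * of_real r * w * cnj w
      + (of_real r)\<^sup>2 * (p * q - c * cnj c) * w * cnj w"
    unfolding c' w_def Z_eq by (rule qform_phase_block_witnesses) (simp_all add: p q tr)
  finally show ?thesis
    unfolding Z_eq mtrace_mat2 mult.assoc[of _ w] ww det P_def by (simp add: algebra_simps power2_eq_square)
qed

section \<open>The covariance bound\<close>

lemma TI_phase_bound:
  assumes l: "\<bar>l\<bar> < 1" and \<tau>: "\<tau> \<noteq> 0"
    and TI: "TI_op (2 ^ n) 2 (total_ham (qubit_ham \<tau>) n) (qubit_ham \<tau>) E"
    and \<omega>: "E (tensor_pow n (rho l)) = mat2 p c c' q"
  shows "(cmod c)\<^sup>2 * (cmod (cis \<theta> - 1))\<^sup>2 * (2 * r - r\<^sup>2 * (Re p * (1 - Re p) - (cmod c)\<^sup>2))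
           \<le> (1 + l\<^sup>2 / (1 - l\<^sup>2) * (cmod (cis \<theta> - 1))\<^sup>2) ^ n - 1"
proof -
  define t where "t = - \<theta> * \<tau> / (2 * pi)"
  define z where "z = cis \<theta>"
  have z: "cis (- 2 * t * pi / \<tau>) = z" using \<tau> by (simp add: t_def z_def)
  define R Q where "R = tensor_pow n (rho_factor l)" and "Q = tensor_pow n (rho_cofactor l z)"
  have R: "R \<in> carrier_mat (2^n) (2^n)" and Q: "Q \<in> carrier_mat (2^n) (2^n)"
    by (simp_all add: R_def Q_def)
  have cptp: "cptp (2^n) 2 E" using TI by (simp add: TI_op_def)
  have RR: "adjoint_mat R * R = tensor_pow n (rho l)"
    unfolding R_def adjoint_tensor_pow_mult[OF rho_factor_carrier rho_factor_carrier]
    by (simp add: adjoint_rho_factor_mult_self[OF l])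
  have RQ: "adjoint_mat R * Q = tensor_pow n (rho_phase l z)"
    unfolding R_def Q_def adjoint_tensor_pow_mult[OF rho_factor_carrier rho_cofactor_carrier]
    by (simp add: adjoint_rho_factor_mult_cofactor[OF l])
  have "adjoint_mat Q * R = adjoint_mat (adjoint_mat R * Q)"
    by (simp add: adjoint_mat_mult[OF adjoint_mat_carrier[OF R] Q])
  then have QR: "adjoint_mat Q * R = tensor_pow n (rho_phase l z)"
    by (simp add: RQ adjoint_tensor_pow adjoint_rho_phase)
  have "E (tensor_pow n (rho_phase l z))
      = E (evol (total_ham (qubit_ham \<tau>) n) t * tensor_pow n (rho l) * evol (total_ham (qubit_ham \<tau>) n) (- t))"
    by (simp only: evol_total_qubit_ham_conj[OF rho_carrier] evol_qubit_ham_conj_rho z)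
  also have "\<dots> = evol (qubit_ham \<tau>) t * E (tensor_pow n (rho l)) * evol (qubit_ham \<tau>) (- t)"
    using TI density_tensor_pow_rho[OF l] by (simp add: TI_op_def)
  also have "\<dots> = mat2 p (z * c) (cnj z * c') q"
    by (simp only: \<omega> evol_qubit_ham_conj z)
  finally have ERQ: "E (tensor_pow n (rho_phase l z)) = mat2 p (z * c) (cnj z * c') q" .
  have tr: "p + q = 1"
    using cptp_density[OF cptp density_tensor_pow_rho[OF l]] \<omega> by (simp add: density_def mtrace_mat2)
  have QQ: "adjoint_mat Q * Q \<in> carrier_mat (2^n) (2^n)"
    using Q by (metis adjoint_mat_carrier mult_carrier_mat)
  have "mtrace (E (adjoint_mat Q * Q)) = mtrace (adjoint_mat Q * Q)"
    using cptp QQ by (simp add: cptp_def)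
  also have "\<dots> = mtrace (adjoint_mat (rho_cofactor l z) * rho_cofactor l z) ^ n"
    unfolding Q_def adjoint_tensor_pow_mult[OF rho_cofactor_carrier rho_cofactor_carrier]
    by (rule mtrace_tensor_pow[of _ 2]) (simp only: rho_cofactor_def adjoint_mat2 mult_mat2 mat2_carrier)
  also have "\<dots> = of_real ((1 + l\<^sup>2 / (1 - l\<^sup>2) * (cmod (z - 1))\<^sup>2) ^ n)"
    by (simp only: mtrace_rho_cofactor[OF l] z_def norm_cis of_real_power)
  finally have trZ: "Re (mtrace (E (adjoint_mat Q * Q))) = (1 + l\<^sup>2 / (1 - l\<^sup>2) * (cmod (z - 1))\<^sup>2) ^ n"
    by simp
  have "psd 4 (four_block_mat (mat2 p c c' q) (mat2 p (z * c) (cnj z * c') q)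
      (mat2 p (z * c) (cnj z * c') q) (E (adjoint_mat Q * Q)))"
    using psd_channel_four_block_gram[OF cptp R Q] by (simp add: RR RQ QR \<omega> ERQ)
  from psd_phase_block_bound[OF this _ tr, of r] show ?thesis
    using cptp QQ by (simp add: cptp_def trZ z_def)
qed

lemma power_minus_one_le: "0 \<le> (y::real) \<Longrightarrow> (1 + y) ^ n - 1 \<le> real n * y * (1 + y) ^ n"
proof (induction n)
  case (Suc n)
  have "(1 + y) ^ Suc n - 1 = (1 + y) * ((1 + y) ^ n - 1) + y"
    by (simp add: algebra_simps)
  also have "\<dots> \<le> (1 + y) * (real n * y * (1 + y) ^ n) + y * (1 + y) ^ Suc n"
    using Suc by (intro add_mono mult_left_mono)
      (simp_all add: mult_le_cancel_left1 one_le_power del: power_Suc)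
  also have "\<dots> = real (Suc n) * y * (1 + y) ^ Suc n"
    by (simp add: algebra_simps)
  finally show ?case .
qed simp

lemma le_of_power_bound_at_zero:
  fixes A K :: real and \<kappa> :: "'a \<Rightarrow> real"
  assumes "0 \<le> K" "F \<noteq> bot" "(\<kappa> \<longlongrightarrow> 0) F"
    and "eventually (\<lambda>x. 0 < \<kappa> x \<and> A * \<kappa> x \<le> (1 + K * \<kappa> x) ^ n - 1) F"
  shows "A \<le> real n * K"
proof -
  have "eventually (\<lambda>x. A \<le> real n * K * (1 + K * \<kappa> x) ^ n) F"
    using assms(4)
  proof (rule eventually_mono)
    fix x assume x: "0 < \<kappa> x \<and> A * \<kappa> x \<le> (1 + K * \<kappa> x) ^ n - 1"
    moreover have "(1 + K * \<kappa> x) ^ n - 1 \<le> real n * (K * \<kappa> x) * (1 + K * \<kappa> x) ^ n"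
      using x assms(1) by (intro power_minus_one_le) simp
    moreover have "real n * (K * \<kappa> x) * (1 + K * \<kappa> x) ^ n = (real n * K * (1 + K * \<kappa> x) ^ n) * \<kappa> x"
      by (simp add: mult_ac)
    ultimately have "A * \<kappa> x \<le> (real n * K * (1 + K * \<kappa> x) ^ n) * \<kappa> x"
      using x by linarith
    then show "A \<le> real n * K * (1 + K * \<kappa> x) ^ n"
      using x by simp
  qed
  moreover have "((\<lambda>x. real n * K * (1 + K * \<kappa> x) ^ n) \<longlongrightarrow> real n * K * (1 + K * 0) ^ n) F"
    by (intro tendsto_intros assms(3))
  ultimately show ?thesis
    using tendsto_le[OF assms(2) _ tendsto_const] by fastforce
qed

lemma cis_minus_one_tendsto: "((\<lambda>\<theta>. (cmod (cis \<theta> - 1))\<^sup>2) \<longlongrightarrow> 0) (at_right 0)"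
proof -
  have "((\<lambda>\<theta>. (cmod (cis \<theta> - 1))\<^sup>2) \<longlongrightarrow> (cmod (cis 0 - 1))\<^sup>2) (at_right 0)"
    by (intro tendsto_intros)
  then show ?thesis by simp
qed

lemma cis_minus_one_pos: "0 < \<theta> \<Longrightarrow> \<theta> < pi \<Longrightarrow> 0 < (cmod (cis \<theta> - 1))\<^sup>2"
proof -
  assume "0 < \<theta>" "\<theta> < pi"
  then have "cos \<theta> < cos 0" by (intro cos_monotone_0_pi) auto
  then have "cis \<theta> \<noteq> 1" by (auto simp: complex_eq_iff)
  then show ?thesis by simp
qed

lemma quadratic_sup_bound:
  fixes a d N :: real
  assumes "0 \<le> a" and bound: "\<And>r. a * (2 * r - r\<^sup>2 * d) \<le> N"
  shows "a \<le> N * max 0 d"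
proof (cases "0 < d")
  case True
  then show ?thesis
    using bound[of "1 / d"] by (simp add: power2_eq_square field_simps)
next
  case False
  have "a \<le> 0"
  proof (rule ccontr)
    assume "\<not> a \<le> 0"
    define r where "r = (\<bar>N\<bar> + 1) / (2 * a)"
    have "a * (r\<^sup>2 * d) \<le> 0"
      using False \<open>\<not> a \<le> 0\<close> by (simp add: mult_nonneg_nonpos)
    moreover have "2 * a * r = \<bar>N\<bar> + 1"
      using \<open>\<not> a \<le> 0\<close> by (simp add: r_def)
    ultimately have "\<bar>N\<bar> + 1 \<le> a * (2 * r - r\<^sup>2 * d)"
      by (simp add: algebra_simps)
    then show False using bound[of r] by linarith
  qed
  then show ?thesis using False by simp
qed

lemma fidelity_from_quadratic_bound:
  fixes x a P N :: real
  assumes "0 \<le> N" "x\<^sup>2 \<le> a" "a \<le> N * max 0 (P * (1 - P) - a)"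
  shows "1 / (4 * N + 4) \<le> 1 / 2 - x"
proof -
  have "P * (1 - P) \<le> 1 / 4"
    using zero_le_power2[of "P - 1 / 2"] by (simp add: power2_eq_square algebra_simps)
  then have "a \<le> N * max 0 (1 / 4 - a)"
    using assms(1,3) by (smt (verit) mult_left_mono)
  then have "a * (4 * N + 4) \<le> N"
    using assms(1,2) zero_le_power2[of x] by (cases "a \<le> 1 / 4") (auto simp: algebra_simps)
  then have "a \<le> N / (4 * N + 4)"
    using assms(1) by (simp add: pos_le_divide_eq)
  moreover have "N / (4 * N + 4) = N * (4 * N + 4) / (4 * N + 4)\<^sup>2"
    using assms(1) by (simp add: power2_eq_square)
  moreover have "N * (4 * N + 4) / (4 * N + 4)\<^sup>2 \<le> ((2 * N + 1) / (4 * N + 4))\<^sup>2"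
    unfolding power_divide by (rule divide_right_mono) (simp add: power2_eq_square algebra_simps, simp)
  ultimately have "x\<^sup>2 \<le> ((2 * N + 1) / (4 * N + 4))\<^sup>2"
    using assms(2) by linarith
  then have "x \<le> (2 * N + 1) / (4 * N + 4)"
    using assms(1) by (smt (verit) power2_le_imp_le divide_nonneg_nonneg)
  then show ?thesis
    using assms(1) by (simp add: field_simps)
qed

lemma TI_fidelity_bound:
  assumes \<tau>: "\<tau> \<noteq> 0" and l: "\<bar>l\<bar> < 1"
    and TI: "TI_op (2 ^ n) 2 (total_ham (qubit_ham \<tau>) n) (qubit_ham \<tau>) E"
  shows "1 / (4 * (real n * (l\<^sup>2 / (1 - l\<^sup>2))) + 4) \<le> 1 - Re (qform (E (tensor_pow n (rho l))) Phi)"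
proof -
  define K where "K = l\<^sup>2 / (1 - l\<^sup>2)"
  have "l\<^sup>2 < 1" using l by (simp add: abs_square_less_1)
  then have K: "0 \<le> K" by (simp add: K_def)
  have "density 2 (E (tensor_pow n (rho l)))"
    using TI unfolding TI_op_def by (blast intro: cptp_density density_tensor_pow_rho[OF l])
  moreover obtain p c c' q where \<omega>: "E (tensor_pow n (rho l)) = mat2 p c c' q"
    using calculation mat2_eta by (metis density_def psd_def)
  ultimately have "psd 2 (mat2 p c c' q)" and tr: "p + q = 1"
    by (simp_all add: density_def mtrace_mat2)
  then have c': "c' = cnj c"
    using psd_hermitian[of 2 "mat2 p c c' q" 0 1] by simp
  have "(cmod c)\<^sup>2 * (2 * r - r\<^sup>2 * (Re p * (1 - Re p) - (cmod c)\<^sup>2)) \<le> real n * K" for r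
  proof (rule le_of_power_bound_at_zero[OF K _ cis_minus_one_tendsto])
    show "eventually (\<lambda>\<theta>. 0 < (cmod (cis \<theta> - 1))\<^sup>2 \<and>
        (cmod c)\<^sup>2 * (2 * r - r\<^sup>2 * (Re p * (1 - Re p) - (cmod c)\<^sup>2)) * (cmod (cis \<theta> - 1))\<^sup>2
          \<le> (1 + K * (cmod (cis \<theta> - 1))\<^sup>2) ^ n - 1) (at_right 0)"
      using eventually_at_right_real[OF pi_gt_zero]
    proof (rule eventually_mono)
      fix \<theta> :: real assume "\<theta> \<in> {0<..<pi}"
      then show "0 < (cmod (cis \<theta> - 1))\<^sup>2 \<and>
        (cmod c)\<^sup>2 * (2 * r - r\<^sup>2 * (Re p * (1 - Re p) - (cmod c)\<^sup>2)) * (cmod (cis \<theta> - 1))\<^sup>2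
          \<le> (1 + K * (cmod (cis \<theta> - 1))\<^sup>2) ^ n - 1"
        using cis_minus_one_pos TI_phase_bound[OF l \<tau> TI \<omega>, of \<theta> r]
        by (simp add: K_def mult_ac)
    qed
  qed simp
  then have "(cmod c)\<^sup>2 \<le> real n * K * max 0 (Re p * (1 - Re p) - (cmod c)\<^sup>2)"
    by (intro quadratic_sup_bound) simp_all
  moreover have "(Re c)\<^sup>2 \<le> (cmod c)\<^sup>2"
    using abs_Re_le_cmod[of c] by (metis abs_ge_zero power2_abs power_mono)
  ultimately have "1 / (4 * (real n * K) + 4) \<le> 1 / 2 - Re c"
    using K by (intro fidelity_from_quadratic_bound) simp_all
  moreover have "Re (qform (E (tensor_pow n (rho l))) Phi) = 1 / 2 + Re c"
    using arg_cong[OF tr, of Re] by (simp add: \<omega> c' qform_mat2_Phi)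
  ultimately show ?thesis by (simp add: K_def)
qed

theorem mainTheorem19:
  fixes \<tau> l :: real
  assumes "0 < \<tau>" and "0 < l" and "l < 1"
  shows "\<exists>C N. \<forall>n \<ge> N. \<forall>E.
           TI_op (2 ^ n) 2 (total_ham (qubit_ham \<tau>) n) (qubit_ham \<tau>) E \<longrightarrow>
           1 - Re (qform (E (tensor_pow n (rho l))) Phi)
             \<ge> (1 / real n) * ((1 - l\<^sup>2) / (4 * l\<^sup>2)) - C / (real n)\<^sup>2"
proof -
  define K where "K = l\<^sup>2 / (1 - l\<^sup>2)"
  have "l\<^sup>2 < 1" using assms by (simp add: power_less_one_iff)
  then have K: "0 < K" using assms(2) by (simp add: K_def)
  show ?thesis
  proof (intro exI[of _ "1 / (4 * K\<^sup>2)"] exI[of _ 1] allI impI)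
    fix n :: nat and E assume n: "1 \<le> n"
      and TI: "TI_op (2 ^ n) 2 (total_ham (qubit_ham \<tau>) n) (qubit_ham \<tau>) E"
    define x where "x = real n * K"
    have x: "0 < x" using n K by (simp add: x_def)
    have "(1 / real n) * ((1 - l\<^sup>2) / (4 * l\<^sup>2)) - 1 / (4 * K\<^sup>2) / (real n)\<^sup>2 = (x - 1) / (4 * x\<^sup>2)"
      using assms(2) \<open>l\<^sup>2 < 1\<close> n by (simp add: x_def K_def field_simps power2_eq_square)
    also have "\<dots> \<le> 1 / (4 * x + 4)"
      using x by (simp add: field_simps power2_eq_square)
    also have "\<dots> \<le> 1 - Re (qform (E (tensor_pow n (rho l))) Phi)"
      using TI_fidelity_bound[OF _ _ TI] assms by (simp add: x_def K_def)
    finally show "(1 / real n) * ((1 - l\<^sup>2) / (4 * l\<^sup>2)) - 1 / (4 * K\<^sup>2) / (real n)\<^sup>2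
        \<le> 1 - Re (qform (E (tensor_pow n (rho l))) Phi)" .
  qed
qed

end
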